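(* Suppose $0<\lambda\le\frac12$ and $\tau>0$. There exists a universal constant $c_0\in(0,1)$ such that the following holds. Let $\mu=\frac{c_0\lambda}{\tau}$ and let $p_0:\mathbb{R}\to[0,\infty)$ be the probability density $p_0(x)=\frac\tau4$ for $|x|\le\frac1\tau$ and $p_0(x)=\frac{1}{4\tau x^2}$ for $|x|>\frac1\tau$. Let $h:\mathbb{R}\to\mathbb{C}$ be the purely imaginary function $$h(t)=\begin{cases}0,&t<-2\tau,\\-j(-t),&-2\tau\le t\le-\tau,\\ k(t),&-\tau<t<\tau,\\ j(t),&\tau\le t\le2\tau,\\0,&t>2\tau,\end{cases}$$ with $k(t)=2i\frac{1-\lambda}{\lambda}\sin(t\mu)$ and $j(t)=2i\frac{1-\lambda}{\lambda}\sin(\tau\mu)\frac{2\tau-t}{\tau}$. Define the real-valued function $\Delta=-\frac{\hat h}{2\pi}$, where $\hat h(x)=\int e^{-itx}h(t)\,dt$. Then $p_1=p_0+\Delta$ is a probability density function. *)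

theory Defs
  imports "HOL-Analysis.Analysis"
begin

definition p0 :: "real \<Rightarrow> real \<Rightarrow> real" where
  "p0 \<tau> x = (if \<bar>x\<bar> \<le> 1 / \<tau> then \<tau> / 4 else 1 / (4 * \<tau> * x\<^sup>2))"

definition kfun :: "real \<Rightarrow> real \<Rightarrow> real \<Rightarrow> real \<Rightarrow> complex" where
  "kfun lam \<mu> \<tau> t = 2 * \<i> * of_real ((1 - lam) / lam) * of_real (sin (t * \<mu>))"

definition jfun :: "real \<Rightarrow> real \<Rightarrow> real \<Rightarrow> real \<Rightarrow> complex" where
  "jfun lam \<mu> \<tau> t = 2 * \<i> * of_real ((1 - lam) / lam) * of_real (sin (\<tau> * \<mu>))
       * of_real ((2 * \<tau> - t) / \<tau>)"

definition hfun :: "real \<Rightarrow> real \<Rightarrow> real \<Rightarrow> real \<Rightarrow> complex" where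
  "hfun lam \<mu> \<tau> t =
     (if t < - 2 * \<tau> then 0
      else if t \<le> - \<tau> then - jfun lam \<mu> \<tau> (- t)
      else if t < \<tau> then kfun lam \<mu> \<tau> t
      else if t \<le> 2 * \<tau> then jfun lam \<mu> \<tau> t
      else 0)"

definition fourier :: "(real \<Rightarrow> complex) \<Rightarrow> real \<Rightarrow> complex" where
  "fourier h x = (LINT t|lborel. exp (- \<i> * of_real (t * x)) * h t)"

definition Delta :: "real \<Rightarrow> real \<Rightarrow> real \<Rightarrow> real \<Rightarrow> complex" where
  "Delta lam \<mu> \<tau> x = - fourier (hfun lam \<mu> \<tau>) x / (2 * of_real pi)"

definition is_prob_density :: "(real \<Rightarrow> real) \<Rightarrow> bool" where
  "is_prob_density p \<longleftrightarrow> (\<forall>x. 0 \<le> p x) \<and> integrable lborel p \<and> (LINT x|lborel. p x) = 1"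

end

theory Submission
  imports Defs
begin

text \<open>
  Write \<open>h = i g\<close> with \<open>g\<close> real, odd and supported in \<open>[-2\<tau>, 2\<tau>]\<close>. Then \<open>\<Delta>\<close> is real:
  \<open>\<Delta> = - G / (2\<pi>)\<close> with the sine transform \<open>G(x) = \<integral> g(t) sin(t x) dt\<close>, which is odd in \<open>x\<close>,
  so \<open>\<Delta>\<close> has integral \<open>0\<close> and \<open>p\<^sub>1\<close> has total mass \<open>1\<close>. Nonnegativity of \<open>p\<^sub>1\<close> reduces to
  \<open>\<bar>G\<bar> \<le> 2\<pi> p\<^sub>0\<close>. Near the origin the trivial bound \<open>\<bar>G\<bar> \<le> 4\<tau> sup \<bar>g\<bar>\<close> suffices. For
  \<open>\<bar>x\<bar> > 1/\<tau>\<close>, integrating the piecewise sine/linear profile explicitly, the \<open>1/x\<close> terms of the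
  closed form cancel and \<open>\<bar>G(x)\<bar> \<le> 24 (1 - \<lambda>)/\<lambda> \<cdot> \<mu>/x\<^sup>2 = 24 (1 - \<lambda>) c\<^sub>0 / (\<tau> x\<^sup>2)\<close>,
  which is below \<open>2\<pi> p\<^sub>0(x) = \<pi>/(2\<tau> x\<^sup>2)\<close> for \<open>c\<^sub>0 = 1/100\<close>.
\<close>

lemma p0_borel_measurable [measurable]: "p0 \<tau> \<in> borel_measurable borel"
  unfolding p0_def by measurable

lemma p0_nonneg: "0 < \<tau> \<Longrightarrow> 0 \<le> p0 \<tau> x"
  unfolding p0_def by auto

lemma p0_even: "p0 \<tau> (- x) = p0 \<tau> x"
  unfolding p0_def by simp

lemma p0_has_integral_UNIV:
  assumes \<tau>: "0 < \<tau>"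
  shows "(p0 \<tau> has_integral 1) UNIV"
proof -
  define a where "a = 1 / \<tau>"
  have a: "0 < a" using \<tau> by (simp add: a_def)
  have tail_right: "(p0 \<tau> has_integral 1/4) {a..}"
  proof -
    have "((\<lambda>x. 1 / x ^ 2) has_integral 1 / a) {a..}"
      using has_integral_inverse_power_to_inf[of 2 a] a by simp
    from has_integral_mult_right[OF this, of "1 / (4 * \<tau>)"]
    have "((\<lambda>x. 1 / (4 * \<tau>) * (1 / x ^ 2)) has_integral 1/4) {a..}"
      using \<tau> by (simp add: a_def)
    moreover have "1 / (4 * \<tau>) * (1 / x ^ 2) = p0 \<tau> x" if "x \<in> {a..}" for x
    proof (cases "x = a")
      case True
      then show ?thesis using \<tau> by (simp add: p0_def a_def power2_eq_square)
    next
      case False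
      then have "\<not> \<bar>x\<bar> \<le> 1 / \<tau>" using that a by (auto simp: a_def)
      then show ?thesis by (simp add: p0_def)
    qed
    ultimately show ?thesis
      by (rule has_integral_eq[rotated])
  qed
  have tail_left: "(p0 \<tau> has_integral 1/4) {..-a}"
  proof -
    have "p0 \<tau> absolutely_integrable_on {a..}" "integral {a..} (p0 \<tau>) = 1/4"
      using tail_right nonnegative_absolutely_integrable_1[of "p0 \<tau>" "{a..}"] p0_nonneg[OF \<tau>]
      by (auto simp: has_integral_iff)
    then have "(\<lambda>x. p0 \<tau> (-x)) absolutely_integrable_on {..-a} \<and>
        integral {..-a} (\<lambda>x. p0 \<tau> (-x)) = 1/4"
      by (subst has_absolute_integral_reflect_real) auto
    then show ?thesis
      unfolding p0_even by (metis absolutely_integrable_on_def has_integral_integrable_integral)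
  qed
  have middle: "(p0 \<tau> has_integral 1/2) {-a..a}"
  proof -
    have "((\<lambda>x. \<tau> / 4) has_integral \<tau> / 4 * (a - - a)) {-a..a}"
      using has_integral_const_real[of "\<tau>/4" "-a" a] a by simp
    then have "((\<lambda>x. \<tau> / 4) has_integral 1/2) {-a..a}"
      using \<tau> by (simp add: a_def)
    moreover have "\<tau> / 4 = p0 \<tau> x" if "x \<in> {-a..a}" for x
      using that by (auto simp: p0_def a_def)
    ultimately show ?thesis
      by (rule has_integral_eq[rotated])
  qed
  have "(p0 \<tau> has_integral 1/4 + 1/2) ({..-a} \<union> {-a..a})"
    by (rule has_integral_Un[OF tail_left middle]) (auto intro: negligible_subset[of "{-a}"])
  then have "(p0 \<tau> has_integral (1/4 + 1/2) + 1/4) ({..-a} \<union> {-a..a} \<union> {a..})"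
    by (rule has_integral_Un[OF _ tail_right]) (use a in \<open>auto intro: negligible_subset[of "{a}"]\<close>)
  moreover have "{..-a} \<union> {-a..a} \<union> {a..} = UNIV" by auto
  ultimately show ?thesis by simp
qed

lemma p0_has_bochner_integral:
  assumes "0 < \<tau>"
  shows "has_bochner_integral lborel (p0 \<tau>) 1"
proof (rule has_bochner_integral_nn_integral)
  show "(\<integral>\<^sup>+x. ennreal (p0 \<tau> x) \<partial>lborel) = ennreal 1"
    using nn_integral_has_integral_lborel[OF _ p0_nonneg p0_has_integral_UNIV] assms by simp
  show "p0 \<tau> \<in> borel_measurable lborel"
    by measurable
  show "AE x in lborel. 0 \<le> p0 \<tau> x"
    using p0_nonneg[OF assms] by simp
qed simp

lemma is_prob_density_p0: "0 < \<tau> \<Longrightarrow> is_prob_density (p0 \<tau>)"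
  using p0_has_bochner_integral[of \<tau>] p0_nonneg[of \<tau>]
  by (auto simp: is_prob_density_def has_bochner_integral_iff)

text \<open>No integrability hypothesis is needed: a non-integrable function has Bochner integral \<open>0\<close>.\<close>

lemma lborel_integral_odd_eq_0:
  fixes f :: "real \<Rightarrow> 'a::{banach, second_countable_topology}"
  assumes odd: "\<And>x. f (- x) = - f x"
  shows "(LINT x|lborel. f x) = 0"
proof -
  have "(LINT x|lborel. f x) = (LINT x|lborel. f (- x))"
    using lborel_integral_real_affine[of "-1" f 0] by simp
  also have "\<dots> = - (LINT x|lborel. f x)"
    unfolding odd by simp
  finally have "2 *\<^sub>R (LINT x|lborel. f x) = 0"
    by (simp add: scaleR_2 eq_neg_iff_add_eq_0)
  then show ?thesis by simp
qed

lemma is_prob_density_add_odd: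
  assumes p: "is_prob_density p"
    and d_meas: "d \<in> borel_measurable borel"
    and d_le: "\<And>x. \<bar>d x\<bar> \<le> p x"
    and d_odd: "\<And>x. d (- x) = - d x"
  shows "is_prob_density (\<lambda>x. p x + d x)"
proof -
  have p_int: "integrable lborel p" and p_1: "(LINT x|lborel. p x) = 1"
    using p by (auto simp: is_prob_density_def)
  have d_int: "integrable lborel d"
    using d_meas d_le
    by (intro Bochner_Integration.integrable_bound[OF p_int] AE_I2) (auto intro: order_trans[OF _ abs_ge_self])
  have "(LINT x|lborel. p x + d x) = (LINT x|lborel. p x) + (LINT x|lborel. d x)"
    using p_int d_int by (rule Bochner_Integration.integral_add)
  also have "\<dots> = 1"
    using p_1 lborel_integral_odd_eq_0[of d, OF d_odd] by simp
  finally have "(LINT x|lborel. p x + d x) = 1" .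
  moreover have "0 \<le> p x + d x" for x
    using d_le[of x] by linarith
  ultimately show ?thesis
    using p_int d_int unfolding is_prob_density_def by auto
qed

definition sin_transform :: "(real \<Rightarrow> real) \<Rightarrow> real \<Rightarrow> real" where
  "sin_transform g x = (LINT t|lborel. g t * sin (t * x))"

lemma sin_transform_odd: "sin_transform g (- x) = - sin_transform g x"
  unfolding sin_transform_def by simp

lemma borel_measurable_sin_transform [measurable]:
  assumes [measurable]: "g \<in> borel_measurable borel"
  shows "sin_transform g \<in> borel_measurable borel"
proof -
  have "(\<lambda>(x, t). g t * sin (t * x)) \<in> borel_measurable (lborel \<Otimes>\<^sub>M lborel)"
    by measurable
  from lborel.borel_measurable_lebesgue_integral[OF this]
  show ?thesis unfolding sin_transform_def[abs_def] by simp
qed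

lemma integrable_mult_bounded:
  fixes g :: "real \<Rightarrow> real"
  assumes "integrable lborel g" "f \<in> borel_measurable borel" "\<And>t. \<bar>f t\<bar> \<le> 1"
  shows "integrable lborel (\<lambda>t. g t * f t)"
proof (rule Bochner_Integration.integrable_bound[OF assms(1)])
  show "AE t in lborel. norm (g t * f t) \<le> norm (g t)"
    using assms(3) by (intro AE_I2) (simp add: abs_mult mult_left_le)
qed (use assms in measurable)

lemma fourier_imaginary_odd:
  fixes g :: "real \<Rightarrow> real"
  assumes g_int: "integrable lborel g" and g_odd: "\<And>t. g (- t) = - g t"
  shows "fourier (\<lambda>t. \<i> * of_real (g t)) x = of_real (sin_transform g x)"
proof -
  define s where "s t = g t * sin (t * x)" for t
  define c where "c t = g t * cos (t * x)" for t
  have int_s: "integrable lborel s" and int_c: "integrable lborel c"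
    using g_int unfolding s_def c_def by (auto intro!: integrable_mult_bounded)
  have "exp (- \<i> * of_real (t * x)) * (\<i> * of_real (g t)) = of_real (s t) + \<i> * of_real (c t)" for t
    by (simp add: s_def c_def complex_eq_iff Re_exp Im_exp)
  then have "fourier (\<lambda>t. \<i> * of_real (g t)) x = (LINT t|lborel. of_real (s t) + \<i> * of_real (c t))"
    by (simp add: fourier_def)
  also have "\<dots> = of_real (LINT t|lborel. s t) + \<i> * of_real (LINT t|lborel. c t)"
    using int_s int_c by simp
  also have "(LINT t|lborel. c t) = 0"
    by (rule lborel_integral_odd_eq_0) (simp add: c_def g_odd)
  finally show ?thesis
    by (simp add: sin_transform_def s_def)
qed

lemma integrable_bounded_support:
  fixes g :: "real \<Rightarrow> real"
  assumes "g \<in> borel_measurable borel" "\<And>t. \<bar>g t\<bar> \<le> B" "\<And>t. t \<notin> {a..b} \<Longrightarrow> g t = 0"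
  shows "integrable lborel g"
proof (rule Bochner_Integration.integrable_bound)
  show "integrable lborel (\<lambda>t. indicator {a..b} t * B)"
    using borel_integrable_atLeastAtMost'[of a b "\<lambda>_. B"] by (simp add: set_integrable_def mult.commute)
  show "AE t in lborel. norm (g t) \<le> norm (indicator {a..b} t * B)"
    using assms(2,3) by (intro AE_I2) (auto simp: indicator_def intro: order_trans[OF _ abs_ge_self])
qed (use assms(1) in measurable)

lemma abs_sin_transform_le:
  assumes "g \<in> borel_measurable borel" "\<And>t. \<bar>g t\<bar> \<le> B" "\<And>t. t \<notin> {a..b} \<Longrightarrow> g t = 0"
    and "a \<le> b"
  shows "\<bar>sin_transform g x\<bar> \<le> B * (b - a)"
proof -
  have "\<bar>sin_transform g x\<bar> \<le> (LINT t|lborel. \<bar>g t * sin (t * x)\<bar>)"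
    unfolding sin_transform_def using integral_norm_bound[of lborel "\<lambda>t. g t * sin (t * x)"] by simp
  also have "\<dots> \<le> (LINT t|lborel. indicator {a..b} t * B)"
  proof (rule integral_mono)
    show "integrable lborel (\<lambda>t. \<bar>g t * sin (t * x)\<bar>)"
      using integrable_bounded_support[OF assms(1-3)]
      by (intro integrable_abs integrable_mult_bounded) auto
    show "integrable lborel (\<lambda>t. indicator {a..b} t * B)"
      using borel_integrable_atLeastAtMost'[of a b "\<lambda>_. B"] by (simp add: set_integrable_def mult.commute)
    show "\<bar>g t * sin (t * x)\<bar> \<le> indicator {a..b} t * B" for t
    proof -
      have "\<bar>g t * sin (t * x)\<bar> \<le> \<bar>g t\<bar>"
        by (simp add: abs_mult mult_left_le)
      then show ?thesis
        using assms(2)[of t] assms(3)[of t] by (auto simp: indicator_def)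
    qed
  qed
  also have "\<dots> = B * (b - a)"
    using assms(4) by simp
  finally show ?thesis .
qed

lemma has_integral_of_real_derivative:
  fixes F f :: "real \<Rightarrow> real"
  assumes "a \<le> b" and "\<And>t. t \<in> {a..b} \<Longrightarrow> (F has_real_derivative f t) (at t)"
  shows "(f has_integral F b - F a) {a..b}"
  using assms
  by (intro fundamental_theorem_of_calculus)
    (auto simp: has_real_derivative_iff_has_vector_derivative[symmetric] intro: DERIV_subset)

lemma has_integral_lborel_support:
  fixes f :: "real \<Rightarrow> real"
  assumes "integrable lborel f" and "\<And>t. t \<notin> {a..b} \<Longrightarrow> f t = 0"
  shows "(f has_integral (LINT t|lborel. f t)) {a..b}"
proof -
  have "(\<lambda>t. if t \<in> {a..b} then f t else 0) = f"
    using assms(2) by auto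
  then show ?thesis
    using has_integral_integral_real[OF assms(1)] has_integral_restrict_UNIV[of "{a..b}" f] by simp
qed

definition hprofile :: "real \<Rightarrow> real \<Rightarrow> real \<Rightarrow> real \<Rightarrow> real" where
  "hprofile lam \<mu> \<tau> t = Im (hfun lam \<mu> \<tau> t)"

lemma hfun_eq_imaginary: "hfun lam \<mu> \<tau> t = \<i> * of_real (hprofile lam \<mu> \<tau> t)"
  by (simp add: complex_eq_iff hprofile_def hfun_def kfun_def jfun_def)

lemma hprofile_eq:
  "hprofile lam \<mu> \<tau> t =
     (if t < - 2 * \<tau> then 0
      else if t \<le> - \<tau> then - (2 * (1 - lam) / lam * sin (\<tau> * \<mu>) * ((2 * \<tau> + t) / \<tau>))
      else if t < \<tau> then 2 * (1 - lam) / lam * sin (t * \<mu>)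
      else if t \<le> 2 * \<tau> then 2 * (1 - lam) / lam * sin (\<tau> * \<mu>) * ((2 * \<tau> - t) / \<tau>)
      else 0)"
  by (simp add: hprofile_def hfun_def kfun_def jfun_def)

lemma hprofile_borel_measurable [measurable]: "hprofile lam \<mu> \<tau> \<in> borel_measurable borel"
  unfolding hprofile_eq[abs_def] by measurable

lemma hprofile_odd: "0 < \<tau> \<Longrightarrow> hprofile lam \<mu> \<tau> (- t) = - hprofile lam \<mu> \<tau> t"
  unfolding hprofile_eq by (auto simp: algebra_simps diff_divide_distrib)

lemma hprofile_eq_0: "0 < \<tau> \<Longrightarrow> t \<notin> {-2*\<tau>..2*\<tau>} \<Longrightarrow> hprofile lam \<mu> \<tau> t = 0"
  unfolding hprofile_eq by auto

lemma abs_hprofile_le: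
  assumes "0 < \<tau>" "0 \<le> \<mu>" "0 < lam" "lam \<le> 1"
  shows "\<bar>hprofile lam \<mu> \<tau> t\<bar> \<le> 2 * (1 - lam) / lam * (\<tau> * \<mu>)"
proof -
  define A where "A = 2 * (1 - lam) / lam"
  have A: "0 \<le> A" using assms by (simp add: A_def)
  have sin_le: "\<bar>sin (s * \<mu>)\<bar> \<le> \<tau> * \<mu>" if "\<bar>s\<bar> \<le> \<tau>" for s
    using abs_sin_x_le_abs_x[of "s * \<mu>"] mult_right_mono[OF that assms(2)] assms(2)
    by (simp add: abs_mult)
  consider "\<bar>t\<bar> < \<tau>" | "\<tau> \<le> \<bar>t\<bar>" "\<bar>t\<bar> \<le> 2 * \<tau>" | "2 * \<tau> < \<bar>t\<bar>"
    by linarith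
  then have "\<bar>hprofile lam \<mu> \<tau> t\<bar> \<le> A * (\<tau> * \<mu>)"
  proof cases
    case 1
    then have "hprofile lam \<mu> \<tau> t = A * sin (t * \<mu>)"
      by (auto simp: hprofile_eq A_def)
    then have "\<bar>hprofile lam \<mu> \<tau> t\<bar> = A * \<bar>sin (t * \<mu>)\<bar>"
      using A by (simp add: abs_mult)
    also have "\<dots> \<le> A * (\<tau> * \<mu>)"
      using sin_le[of t] 1 A by (intro mult_left_mono) auto
    finally show ?thesis .
  next
    case 2
    define w where "w = (2 * \<tau> - \<bar>t\<bar>) / \<tau>"
    have w: "0 \<le> w" "w \<le> 1"
      using 2 assms(1) by (auto simp: w_def field_simps)
    have "\<bar>hprofile lam \<mu> \<tau> t\<bar> = \<bar>A * sin (\<tau> * \<mu>) * w\<bar>"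
    proof (cases "0 \<le> t")
      case True
      then have "hprofile lam \<mu> \<tau> t = A * sin (\<tau> * \<mu>) * w"
        using 2 assms(1) by (simp add: hprofile_eq A_def w_def)
      then show ?thesis by simp
    next
      case False
      then have "hprofile lam \<mu> \<tau> t = - (A * sin (\<tau> * \<mu>) * w)"
        using 2 assms(1) by (simp add: hprofile_eq A_def w_def)
      then show ?thesis by simp
    qed
    also have "\<dots> = A * \<bar>sin (\<tau> * \<mu>)\<bar> * w"
      using A w by (auto simp: abs_mult)
    also have "\<dots> \<le> A * (\<tau> * \<mu>) * 1"
      using sin_le[of \<tau>] A w assms by (intro mult_mono mult_left_mono) simp_all
    finally show ?thesis by simp
  next
    case 3
    then have "hprofile lam \<mu> \<tau> t = 0"
      using assms(1) by (intro hprofile_eq_0) auto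
    then show ?thesis
      using A assms by simp
  qed
  then show ?thesis by (simp add: A_def)
qed

lemma integrable_hprofile:
  assumes "0 < \<tau>" "0 \<le> \<mu>" "0 < lam" "lam \<le> 1"
  shows "integrable lborel (hprofile lam \<mu> \<tau>)"
  by (rule integrable_bounded_support[OF hprofile_borel_measurable abs_hprofile_le[OF assms]
        hprofile_eq_0[OF assms(1)]])

lemma has_real_derivative_sin_scaled:
  "c \<noteq> 0 \<Longrightarrow> ((\<lambda>u. sin (c * u) / c) has_real_derivative cos (c * u)) (at u)"
  by (auto intro!: derivative_eq_intros)

lemma has_real_derivative_linear_sin_antiderivative:
  fixes a x :: real
  assumes "x \<noteq> 0"
  shows "((\<lambda>u. - (a - u) * cos (u * x) / x - sin (u * x) / x\<^sup>2) has_real_derivative (a - u) * sin (u * x)) (at u)"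
  using assms by (auto intro!: derivative_eq_intros simp: field_simps power2_eq_square)

lemma sin_transform_hprofile:
  assumes \<tau>: "0 < \<tau>" and \<mu>: "0 \<le> \<mu>" and lam: "0 < lam" "lam \<le> 1"
    and x: "x \<noteq> 0" "x - \<mu> \<noteq> 0" "x + \<mu> \<noteq> 0"
  shows "sin_transform (hprofile lam \<mu> \<tau>) x = 2 * (1 - lam) / lam *
     (sin ((x - \<mu>) * \<tau>) / (x - \<mu>) - sin ((x + \<mu>) * \<tau>) / (x + \<mu>)
      + 2 * sin (\<tau> * \<mu>) * (cos (\<tau> * x) / x + (sin (\<tau> * x) - sin (2 * \<tau> * x)) / (\<tau> * x\<^sup>2)))"
proof -
  define A where "A = 2 * (1 - lam) / lam"
  define q where "q = sin (\<tau> * \<mu>)"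
  define M where "M = sin ((x - \<mu>) * \<tau>) / (x - \<mu>) - sin ((x + \<mu>) * \<tau>) / (x + \<mu>)"
  define K where "K = cos (\<tau> * x) / x + (sin (\<tau> * x) - sin (2 * \<tau> * x)) / (\<tau> * x\<^sup>2)"
  define f where "f t = hprofile lam \<mu> \<tau> t * sin (t * x)" for t
  have f_even: "f (- t) = f t" for t
    by (simp add: f_def hprofile_odd[OF \<tau>])
  have total: "(f has_integral sin_transform (hprofile lam \<mu> \<tau>) x) {-2*\<tau>..2*\<tau>}"
    unfolding sin_transform_def f_def
    using integrable_mult_bounded[OF integrable_hprofile[OF \<tau> \<mu> lam], of "\<lambda>t. sin (t * x)"]
      hprofile_eq_0[OF \<tau>]
    by (intro has_integral_lborel_support) auto
  have on_middle: "(f has_integral A * M) {-\<tau>..\<tau>}"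
  proof -
    define F where "F u = A / 2 * (sin ((x - \<mu>) * u) / (x - \<mu>) - sin ((x + \<mu>) * u) / (x + \<mu>))" for u
    have "(f has_integral F \<tau> - F (- \<tau>)) {-\<tau>..\<tau>}"
    proof (rule has_integral_of_real_derivative)
      fix u assume u: "u \<in> {-\<tau>..\<tau>}"
      have "hprofile lam \<mu> \<tau> u = A * sin (u * \<mu>)"
        using u \<tau> by (auto simp: hprofile_eq A_def)
      then have "f u = A * (sin (u * \<mu>) * sin (u * x))"
        by (simp add: f_def)
      also have "\<dots> = A / 2 * (cos ((x - \<mu>) * u) - cos ((x + \<mu>) * u))"
      proof -
        have "cos ((x - \<mu>) * u) = cos (u * \<mu> - u * x)"
          using cos_minus[of "u * \<mu> - u * x"] by (simp add: algebra_simps)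
        moreover have "cos ((x + \<mu>) * u) = cos (u * \<mu> + u * x)"
          by (simp add: algebra_simps)
        ultimately show ?thesis
          unfolding sin_times_sin by simp
      qed
      finally have f_u: "f u = A / 2 * (cos ((x - \<mu>) * u) - cos ((x + \<mu>) * u))" .
      show "(F has_real_derivative f u) (at u)"
        unfolding F_def f_u using x by (intro DERIV_cmult DERIV_diff has_real_derivative_sin_scaled)
    qed (use \<tau> in simp)
    moreover have "F (- \<tau>) = - F \<tau>"
      by (simp add: F_def right_diff_distrib)
    ultimately show ?thesis
      by (simp add: F_def M_def)
  qed
  have on_right: "(f has_integral A * q * K) {\<tau>..2*\<tau>}"
  proof -
    define F where "F u = A * q / \<tau> * (- (2 * \<tau> - u) * cos (u * x) / x - sin (u * x) / x\<^sup>2)" for u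
    have "(f has_integral F (2 * \<tau>) - F \<tau>) {\<tau>..2*\<tau>}"
    proof (rule has_integral_of_real_derivative)
      fix u assume u: "u \<in> {\<tau>..2*\<tau>}"
      have f_u: "f u = A * q / \<tau> * ((2 * \<tau> - u) * sin (u * x))"
        using u \<tau> by (auto simp: f_def hprofile_eq A_def q_def)
      show "(F has_real_derivative f u) (at u)"
        unfolding F_def f_u using x by (intro DERIV_cmult has_real_derivative_linear_sin_antiderivative)
    qed (use \<tau> in simp)
    moreover have "F (2 * \<tau>) - F \<tau> = A * q * K"
      using \<tau> x by (simp add: F_def K_def field_simps)
    ultimately show ?thesis by simp
  qed
  have on_left: "(f has_integral A * q * K) {-2*\<tau>..-\<tau>}"
    using on_right has_integral_reflect_real[of f "A * q * K" "2 * \<tau>" \<tau>] by (simp add: f_even)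
  have on_left_middle: "(f has_integral A * q * K + A * M) {-2*\<tau>..\<tau>}"
    by (rule has_integral_combine[OF _ _ on_left on_middle]) (use \<tau> in auto)
  have "(f has_integral A * q * K + A * M + A * q * K) {-2*\<tau>..2*\<tau>}"
    by (rule has_integral_combine[OF _ _ on_left_middle on_right]) (use \<tau> in auto)
  then have "sin_transform (hprofile lam \<mu> \<tau>) x = A * q * K + A * M + A * q * K"
    by (rule has_integral_unique[OF total])
  also have "\<dots> = A * (M + 2 * q * K)"
    by (simp add: algebra_simps)
  finally show ?thesis
    by (simp only: A_def q_def M_def K_def)
qed

text \<open>The \<open>1/x\<close> terms cancel; this is where the \<open>1/x\<^sup>2\<close> decay of the sine transform comes from.\<close>

lemma partial_fraction_identity:
  fixes x \<mu> a b :: real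
  assumes x: "x \<noteq> 0" and xm: "x - \<mu> \<noteq> 0" "x + \<mu> \<noteq> 0"
  shows "(a - b) / (x - \<mu>) - (a + b) / (x + \<mu>) + 2 * b / x
    = 2 * \<mu> * a / (x\<^sup>2 - \<mu>\<^sup>2) - 2 * b * \<mu>\<^sup>2 / (x * (x\<^sup>2 - \<mu>\<^sup>2))"
proof -
  define P where "P = x\<^sup>2 - \<mu>\<^sup>2"
  have P_eq: "P = (x - \<mu>) * (x + \<mu>)"
    by (simp add: P_def power2_eq_square algebra_simps)
  have P: "P \<noteq> 0"
    using xm by (simp add: P_eq)
  have "(a - b) / (x - \<mu>) - (a + b) / (x + \<mu>) = ((a - b) * (x + \<mu>) - (a + b) * (x - \<mu>)) / P"
    using xm unfolding P_eq by (simp add: diff_divide_distrib)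
  also have "\<dots> = (2 * \<mu> * a - 2 * x * b) / P"
    by (simp add: algebra_simps)
  finally have "(a - b) / (x - \<mu>) - (a + b) / (x + \<mu>) + 2 * b / x
      = (x * (2 * \<mu> * a - 2 * x * b) + 2 * b * P) / (x * P)"
    using x P by (simp add: add_divide_distrib)
  also have "x * (2 * \<mu> * a - 2 * x * b) + 2 * b * P = x * (2 * \<mu> * a) - 2 * b * \<mu>\<^sup>2"
    by (simp add: P_def power2_eq_square algebra_simps)
  also have "(x * (2 * \<mu> * a) - 2 * b * \<mu>\<^sup>2) / (x * P) = 2 * \<mu> * a / P - 2 * b * \<mu>\<^sup>2 / (x * P)"
    using x P by (simp add: diff_divide_distrib)
  finally show ?thesis
    unfolding P_def .
qed

lemma abs_rational_kernel_le:
  fixes x \<mu> \<tau> a b d :: real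
  assumes \<tau>: "0 < \<tau>" and \<mu>: "0 \<le> \<mu>" "\<tau> * \<mu> \<le> 1" and x: "x \<noteq> 0" "2 * \<mu>\<^sup>2 \<le> x\<^sup>2"
    and a: "\<bar>a\<bar> \<le> 1" and b: "\<bar>b\<bar> \<le> \<tau> * \<mu>" and d: "\<bar>d\<bar> \<le> 4 * (\<tau> * \<mu>)"
  shows "\<bar>2 * \<mu> * a / (x\<^sup>2 - \<mu>\<^sup>2) - 2 * b * \<mu>\<^sup>2 / (x * (x\<^sup>2 - \<mu>\<^sup>2)) + d / (\<tau> * x\<^sup>2)\<bar>
    \<le> 12 * \<mu> / x\<^sup>2"
proof -
  have x2: "0 < x\<^sup>2" using x by simp
  have D: "x\<^sup>2 / 2 \<le> \<bar>x\<^sup>2 - \<mu>\<^sup>2\<bar>"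
    using x(2) abs_ge_self[of "x\<^sup>2 - \<mu>\<^sup>2"] by linarith
  have "\<mu>\<^sup>2 \<le> \<bar>x\<bar>\<^sup>2"
    using x(2) zero_le_power2[of \<mu>] power2_abs[of x] by linarith
  then have \<mu>_le: "\<mu> \<le> \<bar>x\<bar>"
    by (rule power2_le_imp_le) simp
  have t1: "\<bar>2 * \<mu> * a / (x\<^sup>2 - \<mu>\<^sup>2)\<bar> \<le> 2 * \<mu> / (x\<^sup>2 / 2)"
    unfolding abs_divide using D x2 a \<mu>
    by (intro frac_le) (auto simp: abs_mult intro: mult_left_le)
  have "\<bar>b\<bar> * \<mu>\<^sup>2 \<le> (\<tau> * \<mu>) * \<mu>\<^sup>2"
    by (rule mult_right_mono[OF b]) simp
  also have "\<dots> = (\<tau> * \<mu>) * \<mu> * \<mu>"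
    by (simp add: power2_eq_square)
  also have "\<dots> \<le> 1 * \<mu> * \<bar>x\<bar>"
    using \<mu> \<mu>_le by (intro mult_mono) auto
  finally have "\<bar>b\<bar> * \<mu>\<^sup>2 \<le> \<mu> * \<bar>x\<bar>"
    by simp
  then have num: "\<bar>2 * b * \<mu>\<^sup>2\<bar> \<le> 2 * (\<mu> * \<bar>x\<bar>)"
    by (simp add: abs_mult)
  have "\<bar>2 * b * \<mu>\<^sup>2 / (x * (x\<^sup>2 - \<mu>\<^sup>2))\<bar> \<le> 2 * (\<mu> * \<bar>x\<bar>) / (\<bar>x\<bar> * (x\<^sup>2 / 2))"
  proof -
    have "\<bar>x\<bar> * (x\<^sup>2 / 2) \<le> \<bar>x * (x\<^sup>2 - \<mu>\<^sup>2)\<bar>"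
      unfolding abs_mult using D by (rule mult_left_mono) simp
    then show ?thesis
      unfolding abs_divide using num x x2 \<mu> by (intro frac_le) auto
  qed
  then have t2: "\<bar>2 * b * \<mu>\<^sup>2 / (x * (x\<^sup>2 - \<mu>\<^sup>2))\<bar> \<le> 2 * \<mu> / (x\<^sup>2 / 2)"
    using x by simp
  have "\<bar>d / (\<tau> * x\<^sup>2)\<bar> = \<bar>d\<bar> / (\<tau> * x\<^sup>2)"
    using \<tau> by (simp add: abs_divide abs_mult)
  also have "\<dots> \<le> 4 * (\<tau> * \<mu>) / (\<tau> * x\<^sup>2)"
    using d \<tau> x2 by (intro divide_right_mono) auto
  also have "\<dots> = 4 * \<mu> / x\<^sup>2"
    using \<tau> by simp
  finally have t3: "\<bar>d / (\<tau> * x\<^sup>2)\<bar> \<le> 4 * \<mu> / x\<^sup>2" .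
  have "2 * \<mu> / (x\<^sup>2 / 2) = 4 * \<mu> / x\<^sup>2" by simp
  then show ?thesis
    using t1 t2 t3 unfolding abs_le_iff by simp
qed

lemma abs_hprofile_kernel_le:
  fixes x \<mu> \<tau> :: real
  assumes \<tau>: "0 < \<tau>" and \<mu>: "0 \<le> \<mu>" "\<tau> * \<mu> \<le> 1" and x: "x \<noteq> 0" "2 * \<mu>\<^sup>2 \<le> x\<^sup>2"
  shows "\<bar>sin ((x - \<mu>) * \<tau>) / (x - \<mu>) - sin ((x + \<mu>) * \<tau>) / (x + \<mu>)
      + 2 * sin (\<tau> * \<mu>) * (cos (\<tau> * x) / x + (sin (\<tau> * x) - sin (2 * \<tau> * x)) / (\<tau> * x\<^sup>2))\<bar>
    \<le> 12 * \<mu> / x\<^sup>2"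
proof -
  define S C c q where "S = sin (\<tau> * x)" and "C = cos (\<tau> * x)" and "c = cos (\<tau> * \<mu>)" and "q = sin (\<tau> * \<mu>)"
  have "0 < x\<^sup>2" "0 \<le> \<mu>\<^sup>2"
    using x(1) by simp_all
  then have "\<mu>\<^sup>2 < \<bar>x\<bar>\<^sup>2"
    using x(2) power2_abs[of x] by linarith
  then have \<mu>_lt: "\<mu> < \<bar>x\<bar>"
    by (rule power2_less_imp_less) simp
  have xm: "x - \<mu> \<noteq> 0" "x + \<mu> \<noteq> 0"
    using \<mu>_lt \<mu>(1) by auto
  have "(x - \<mu>) * \<tau> = \<tau> * x - \<tau> * \<mu>" "(x + \<mu>) * \<tau> = \<tau> * x + \<tau> * \<mu>"
    by (simp_all add: algebra_simps)
  then have sin_minus_\<mu>: "sin ((x - \<mu>) * \<tau>) = S * c - C * q"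
    and sin_plus_\<mu>: "sin ((x + \<mu>) * \<tau>) = S * c + C * q"
    by (simp_all add: S_def C_def c_def q_def sin_diff sin_add)
  have q: "\<bar>q\<bar> \<le> \<tau> * \<mu>"
    using abs_sin_x_le_abs_x[of "\<tau> * \<mu>"] \<tau> \<mu> by (simp add: q_def)
  have Sc: "\<bar>S * c\<bar> \<le> 1"
    by (simp add: S_def c_def abs_mult mult_le_one)
  have "\<bar>C\<bar> * \<bar>q\<bar> \<le> 1 * (\<tau> * \<mu>)"
    using q by (intro mult_mono) (auto simp: C_def)
  then have Cq: "\<bar>C * q\<bar> \<le> \<tau> * \<mu>"
    by (simp add: abs_mult)
  have d: "\<bar>2 * q * (S - sin (2 * \<tau> * x))\<bar> \<le> 4 * (\<tau> * \<mu>)"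
  proof -
    have "\<bar>S - sin (2 * \<tau> * x)\<bar> \<le> 2"
      using abs_sin_le_one[of "\<tau> * x"] abs_sin_le_one[of "2 * \<tau> * x"] unfolding S_def by linarith
    then have "\<bar>q\<bar> * \<bar>S - sin (2 * \<tau> * x)\<bar> \<le> (\<tau> * \<mu>) * 2"
      using q by (intro mult_mono) auto
    moreover have "\<bar>2 * q * (S - sin (2 * \<tau> * x))\<bar> = 2 * (\<bar>q\<bar> * \<bar>S - sin (2 * \<tau> * x)\<bar>)"
      by (simp add: abs_mult)
    ultimately show ?thesis
      by linarith
  qed
  have "2 * q * (C / x + (S - sin (2 * \<tau> * x)) / (\<tau> * x\<^sup>2))
      = 2 * (C * q) / x + 2 * q * (S - sin (2 * \<tau> * x)) / (\<tau> * x\<^sup>2)"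
    by (simp add: distrib_left)
  then have "sin ((x - \<mu>) * \<tau>) / (x - \<mu>) - sin ((x + \<mu>) * \<tau>) / (x + \<mu>)
      + 2 * q * (C / x + (S - sin (2 * \<tau> * x)) / (\<tau> * x\<^sup>2))
    = 2 * \<mu> * (S * c) / (x\<^sup>2 - \<mu>\<^sup>2) - 2 * (C * q) * \<mu>\<^sup>2 / (x * (x\<^sup>2 - \<mu>\<^sup>2))
      + 2 * q * (S - sin (2 * \<tau> * x)) / (\<tau> * x\<^sup>2)"
    unfolding sin_minus_\<mu> sin_plus_\<mu> partial_fraction_identity[OF x(1) xm, symmetric]
    by (simp only: add.assoc)
  also have "\<bar>\<dots>\<bar> \<le> 12 * \<mu> / x\<^sup>2"
    by (rule abs_rational_kernel_le[OF \<tau> \<mu> x Sc Cq d])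
  finally show ?thesis
    unfolding S_def C_def q_def .
qed

lemma abs_sin_transform_hprofile_le:
  assumes lam: "0 < lam" "lam \<le> 1/2" and \<tau>: "0 < \<tau>" and \<mu>: "\<mu> = lam / (100 * \<tau>)"
  shows "\<bar>sin_transform (hprofile lam \<mu> \<tau>) x\<bar> \<le> 2 * pi * p0 \<tau> x"
proof -
  define A where "A = 2 * (1 - lam) / lam"
  have A: "0 \<le> A" using lam by (simp add: A_def)
  have lam_le_1: "lam \<le> 1" using lam by simp
  have \<mu>_nonneg: "0 \<le> \<mu>" using lam \<tau> by (simp add: \<mu>)
  have \<tau>\<mu>: "\<tau> * \<mu> = lam / 100" using \<tau> by (simp add: \<mu>)
  have A\<tau>\<mu>: "A * (\<tau> * \<mu>) \<le> 1 / 50"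
    using lam unfolding \<tau>\<mu> A_def by (simp add: field_simps)
  have pi_half: "12 / 50 \<le> pi / 2"
    using pi_gt3 by simp
  show ?thesis
  proof (cases "\<bar>x\<bar> \<le> 1 / \<tau>")
    case True
    have "\<bar>sin_transform (hprofile lam \<mu> \<tau>) x\<bar> \<le> A * (\<tau> * \<mu>) * (2 * \<tau> - - 2 * \<tau>)"
    proof (rule abs_sin_transform_le)
      show "hprofile lam \<mu> \<tau> \<in> borel_measurable borel"
        by (rule hprofile_borel_measurable)
      show "\<bar>hprofile lam \<mu> \<tau> t\<bar> \<le> A * (\<tau> * \<mu>)" for t
        unfolding A_def by (rule abs_hprofile_le[OF \<tau> \<mu>_nonneg lam(1) lam_le_1])
      show "hprofile lam \<mu> \<tau> t = 0" if "t \<notin> {- 2 * \<tau>..2 * \<tau>}" for t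
        using that by (rule hprofile_eq_0[OF \<tau>])
      show "- 2 * \<tau> \<le> 2 * \<tau>"
        using \<tau> by simp
    qed
    also have "\<dots> = (A * (\<tau> * \<mu>) * 4) * \<tau>"
      by simp
    also have "\<dots> \<le> (pi / 2) * \<tau>"
      using A\<tau>\<mu> pi_half \<tau> by (intro mult_right_mono) auto
    also have "\<dots> = 2 * pi * p0 \<tau> x"
      using True by (simp add: p0_def)
    finally show ?thesis .
  next
    case False
    then have x\<tau>: "1 < \<bar>x\<bar> * \<tau>"
      using \<tau> by (simp add: field_simps)
    then have x: "x \<noteq> 0" by auto
    have \<mu>_le: "100 * \<mu> \<le> \<bar>x\<bar>"
      using x\<tau> lam \<tau> by (simp add: \<mu> field_simps)
    have "(100 * \<mu>)\<^sup>2 \<le> \<bar>x\<bar>\<^sup>2"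
      by (rule power_mono[OF \<mu>_le]) (use \<mu>_nonneg in simp)
    then have "10000 * \<mu>\<^sup>2 \<le> x\<^sup>2"
      by (simp add: power_mult_distrib)
    then have \<mu>_sq: "2 * \<mu>\<^sup>2 \<le> x\<^sup>2"
      using zero_le_power2[of \<mu>] by linarith
    have \<tau>\<mu>_le: "\<tau> * \<mu> \<le> 1"
      using lam by (simp add: \<tau>\<mu>)
    have kernel: "\<bar>sin ((x - \<mu>) * \<tau>) / (x - \<mu>) - sin ((x + \<mu>) * \<tau>) / (x + \<mu>)
        + 2 * sin (\<tau> * \<mu>) * (cos (\<tau> * x) / x + (sin (\<tau> * x) - sin (2 * \<tau> * x)) / (\<tau> * x\<^sup>2))\<bar>
      \<le> 12 * \<mu> / x\<^sup>2"
      by (rule abs_hprofile_kernel_le[OF \<tau> \<mu>_nonneg \<tau>\<mu>_le x \<mu>_sq])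
    have "x - \<mu> \<noteq> 0" "x + \<mu> \<noteq> 0"
      using \<mu>_le \<mu>_nonneg x by auto
    from sin_transform_hprofile[OF \<tau> \<mu>_nonneg lam(1) lam_le_1 x this]
    have "\<bar>sin_transform (hprofile lam \<mu> \<tau>) x\<bar> = A * \<bar>sin ((x - \<mu>) * \<tau>) / (x - \<mu>) - sin ((x + \<mu>) * \<tau>) / (x + \<mu>)
        + 2 * sin (\<tau> * \<mu>) * (cos (\<tau> * x) / x + (sin (\<tau> * x) - sin (2 * \<tau> * x)) / (\<tau> * x\<^sup>2))\<bar>"
      unfolding A_def[symmetric] by (simp only: abs_mult abs_of_nonneg[OF A])
    also have "\<dots> \<le> A * (12 * \<mu> / x\<^sup>2)"
      by (rule mult_left_mono[OF kernel A])
    also have "\<dots> = (12 * (A * (\<tau> * \<mu>))) * (1 / (\<tau> * x\<^sup>2))"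
      using \<tau> by simp
    also have "\<dots> \<le> (pi / 2) * (1 / (\<tau> * x\<^sup>2))"
      using A\<tau>\<mu> pi_half \<tau> by (intro mult_right_mono) auto
    also have "\<dots> = 2 * pi * p0 \<tau> x"
      using False by (simp add: p0_def)
    finally show ?thesis .
  qed
qed

lemma Delta_eq_sin_transform:
  assumes "0 < \<tau>" "0 \<le> \<mu>" "0 < lam" "lam \<le> 1"
  shows "Delta lam \<mu> \<tau> x = of_real (- sin_transform (hprofile lam \<mu> \<tau>) x / (2 * pi))"
proof -
  have "fourier (hfun lam \<mu> \<tau>) x = of_real (sin_transform (hprofile lam \<mu> \<tau>) x)"
    unfolding hfun_eq_imaginary
    by (rule fourier_imaginary_odd[OF integrable_hprofile[OF assms] hprofile_odd[OF assms(1)]])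
  then show ?thesis
    by (simp add: Delta_def)
qed

theorem mainTheorem13:
  shows "\<exists>c0::real. 0 < c0 \<and> c0 < 1 \<and>
    (\<forall>lam \<tau> :: real. 0 < lam \<longrightarrow> lam \<le> 1/2 \<longrightarrow> 0 < \<tau> \<longrightarrow>
      (let \<mu> = c0 * lam / \<tau> in
        (\<forall>x. Im (Delta lam \<mu> \<tau> x) = 0) \<and>
        is_prob_density (\<lambda>x. p0 \<tau> x + Re (Delta lam \<mu> \<tau> x))))"
proof (intro exI[of _ "1/100"] conjI allI impI)
  fix lam \<tau> :: real
  assume lam: "0 < lam" "lam \<le> 1/2" and \<tau>: "0 < \<tau>"
  define \<mu> where "\<mu> = 1/100 * lam / \<tau>"
  define G where "G = sin_transform (hprofile lam \<mu> \<tau>)"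
  have \<mu>_eq: "\<mu> = lam / (100 * \<tau>)" and \<mu>_nonneg: "0 \<le> \<mu>" and lam_le_1: "lam \<le> 1"
    using lam \<tau> by (simp_all add: \<mu>_def)
  have Delta_eq: "Delta lam \<mu> \<tau> x = of_real (- G x / (2 * pi))" for x
    unfolding G_def by (rule Delta_eq_sin_transform[OF \<tau> \<mu>_nonneg lam(1) lam_le_1])
  have "is_prob_density (\<lambda>x. p0 \<tau> x + - G x / (2 * pi))"
  proof (rule is_prob_density_add_odd[OF is_prob_density_p0[OF \<tau>]])
    show "(\<lambda>x. - G x / (2 * pi)) \<in> borel_measurable borel"
      unfolding G_def by measurable
    show "\<bar>- G x / (2 * pi)\<bar> \<le> p0 \<tau> x" for x
      using abs_sin_transform_hprofile_le[OF lam \<tau> \<mu>_eq, of x]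
      by (simp add: G_def abs_divide pos_divide_le_eq mult.commute)
    show "- G (- x) / (2 * pi) = - (- G x / (2 * pi))" for x
      by (simp add: G_def sin_transform_odd)
  qed
  then show "let \<mu>' = 1/100 * lam / \<tau> in (\<forall>x. Im (Delta lam \<mu>' \<tau> x) = 0) \<and>
      is_prob_density (\<lambda>x. p0 \<tau> x + Re (Delta lam \<mu>' \<tau> x))"
    unfolding Let_def \<mu>_def[symmetric] by (simp add: Delta_eq)
qed simp_all

end
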